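(* Let $\mathbf a,\mathbf b\in\mathbb R^n$ be nonzero, $L$ a positive integer, $\tilde{\mathbf a}=\textsc{Round}(\mathbf a/\|\mathbf a\|,L)$, $\tilde{\mathbf b}=\textsc{Round}(\mathbf b/\|\mathbf b\|,L)$, $\mathbf a'=\|\mathbf a\|\tilde{\mathbf a}$, $\mathbf b'=\|\mathbf b\|\tilde{\mathbf b}$, and $\mathcal I=\{i:\mathbf a[i]\neq0\text{ and }\mathbf b[i]\neq0\}$. Then: (1) for all $i$, $\mathbf a'[i]^2/\|\mathbf a'\|^2$ and $\mathbf b'[i]^2/\|\mathbf b'\|^2$ are integer multiples of $1/L$; (2) for any $L$, sample number $m$ and random seed $s$, the Weighted MinHash sketch yields identical outputs on $\mathbf a$ and $\mathbf a'$ and on $\mathbf b$ and $\mathbf b'$, i.e. $W_{\mathbf a}=W_{\mathbf a'}$ and $W_{\mathbf b}=W_{\mathbf b'}$; (3) for $\epsilon\in(0,1)$ and $L\ge 9n^6/\epsilon^2$, $|\langle\mathbf a,\mathbf b\rangle-\langle\mathbf a',\mathbf b'\rangle|\le\epsilon\max(\|\mathbf a_{\mathcal I}\|\|\mathbf b\|,\|\mathbf a\|\|\mathbf b_{\mathcal I}\|)$; (4) for $L\ge n^3$, $\max(\|\mathbf a'_{\mathcal I}\|\|\mathbf b'\|,\|\mathbf a'\|\|\mathbf b'_{\mathcal I}\|)\le 2\max(\|\mathbf a_{\mathcal I}\|\|\mathbf b\|,\|\mathbf a\|\|\mathbf b_{\mathcal I}\|)$.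
   Context: $\|\cdot\|$ is the Euclidean norm; $\mathbf a_{\mathcal I}$ is $\mathbf a$ restricted to indices in $\mathcal I$. Rounding procedure $\textsc{Round}(\mathbf z,L)$ for a unit vector $\mathbf z\in\mathbb R^n$: set $\tilde{\mathbf z}[i]=\operatorname{sign}(\mathbf z[i])\sqrt{\lfloor \mathbf z[i]^2L\rfloor/L}$ for all $i$; let $i^*=\arg\max_i|\mathbf z[i]|$; set $\delta=1-\|\tilde{\mathbf z}\|^2$ and replace $\tilde{\mathbf z}[i^*]$ by $\operatorname{sign}(\mathbf z[i^*])\sqrt{\tilde{\mathbf z}[i^*]^2+\delta}$; return $\tilde{\mathbf z}$. Weighted MinHash sketch of $\mathbf a$ (sample number $m$, seed $s$, integer $L$): set $\tilde{\mathbf a}=\textsc{Round}(\mathbf a/\|\mathbf a\|,L)$. For each $i\in\{1,\dots,n\}$ let $\bar{\mathbf a}^{(i)}\in\mathbb R^L$ have its first $\tilde{\mathbf a}[i]^2L$ entries equal to $\tilde{\mathbf a}[i]$ and the rest $0$, and let $\bar{\mathbf a}=[\bar{\mathbf a}^{(1)},\dots,\bar{\mathbf a}^{(n)}]\in\mathbb R^{nL}$. For $i=1,\dots,m$, using seed $s$ select a fully random hash function $h^i:\{1,\dots,nL\}\to[0,1]$ (determined by $s$), let $j^*=\arg\min_{j:\bar{\mathbf a}[j]\neq0}h^i(j)$, and set $W^{hash}_{\mathbf a}[i]=h^i(j^* )$, $W^{val}_{\mathbf a}[i]=\bar{\mathbf a}[j^*]$. The sketch is $W_{\mathbf a}=\{W^{hash}_{\mathbf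 a},W^{val}_{\mathbf a},\|\mathbf a\|\}$. *)

theory Defs
  imports "HOL-Analysis.Analysis"
begin

text \<open>Vectors in R^n are rendered as real^'n, with n = CARD('n).\<close>

definition round_vec :: "real^'n \<Rightarrow> nat \<Rightarrow> real^'n" where
  "round_vec z L =
    (let zt = (\<chi> i. sgn (z$i) * sqrt (real_of_int \<lfloor>(z$i)^2 * real L\<rfloor> / real L));
         istar = arg_max_on (\<lambda>i. \<bar>z$i\<bar>) UNIV;
         \<delta> = 1 - (norm zt)^2
     in \<chi> i. if i = istar then sgn (z$istar) * sqrt ((zt$istar)^2 + \<delta>) else zt$i)"

text \<open>The expanded vector abar in R^{nL}; position (i,k), k < L, stands for
  coordinate (i-1)L + k + 1.\<close>
definition expand_vec :: "real^'n \<Rightarrow> nat \<Rightarrow> ('n \<times> nat) \<Rightarrow> real" where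
  "expand_vec z L = (\<lambda>(i,k). if k < L \<and> real k < (z$i)^2 * real L then z$i else 0)"

text \<open>Weighted MinHash sketch. H s t is the hash function h^t selected by seed s.
  Output: (W^hash, W^val, norm a).\<close>
definition wmh_sketch ::
  "('s \<Rightarrow> nat \<Rightarrow> ('n \<times> nat) \<Rightarrow> real) \<Rightarrow> nat \<Rightarrow> nat \<Rightarrow> 's \<Rightarrow> real^'n
     \<Rightarrow> real list \<times> real list \<times> real" where
  "wmh_sketch H L m s a =
    (let atl = round_vec ((1 / norm a) *\<^sub>R a) L;
         abar = expand_vec atl L;
         D = {j. abar j \<noteq> 0};
         jstar = (\<lambda>t. arg_min_on (H s t) D)
     in (map (\<lambda>t. H s t (jstar t)) [1..<m+1],
         map (\<lambda>t. abar (jstar t)) [1..<m+1],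
         norm a))"

definition restrict_vec :: "real^'n \<Rightarrow> 'n set \<Rightarrow> real^'n" where
  "restrict_vec a I = (\<chi> i. if i \<in> I then a$i else 0)"

end

theory Submission
  imports Defs
begin

(* Round truncates each square z_i^2 of the unit vector z = a/|a| down to the grid (1/L)Z
   and gives the lost mass delta < n/L to a coordinate p of largest modulus. The result r
   is again a unit vector with squares on the grid, so Round fixes it, and the sketches of
   a and a' = |a| r coincide. Rounding keeps signs and zeros; once L >= n^3 every coordinate
   moves by at most 1/sqrt L (at p because z_p^2 >= 1/n), and |r_i| <= 2 |z_i|. As zeros
   are kept, both inner products only see the coordinates in I, so a bilinear perturbation
   estimate on I gives (3), and the coordinatewise bound gives (4). *)

lemma sq_diff_le_diff_sq:
  fixes a b :: real
  assumes "0 \<le> a" "a \<le> b"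
  shows "(b - a)^2 \<le> b^2 - a^2"
proof -
  have "(b - a) * (b - a) \<le> (b - a) * (b + a)"
    using assms by (intro mult_left_mono) auto
  then show ?thesis by (simp add: power2_eq_square algebra_simps)
qed

lemma sq_diff_mult_sq_le:
  fixes a b :: real
  assumes "0 \<le> a" "a \<le> b"
  shows "(b - a)^2 * a^2 \<le> (b^2 - a^2)^2"
proof -
  have "(b - a) * a \<le> (b - a) * (b + a)"
    using assms by (intro mult_left_mono) auto
  also have "\<dots> = b^2 - a^2" by (simp add: power2_eq_square algebra_simps)
  finally have "((b - a) * a)^2 \<le> (b^2 - a^2)^2"
    using assms by (intro power_mono) auto
  then show ?thesis by (simp add: power_mult_distrib)
qed

lemma norm_le_sqrt_card_mult:
  fixes x :: "real^'n"
  assumes "\<And>i. \<bar>x$i\<bar> \<le> c"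
  shows "norm x \<le> sqrt (real CARD('n)) * c"
proof -
  have "0 \<le> c" using assms[of undefined] by linarith
  have "norm x \<le> L2_set (\<lambda>i::'n. c) UNIV"
    unfolding norm_vec_def by (rule L2_set_mono) (simp_all add: assms)
  then show ?thesis using \<open>0 \<le> c\<close> by (simp add: L2_set_constant)
qed

lemma restrict_vec_diff: "restrict_vec (x - y) I = restrict_vec x I - restrict_vec y I"
  by (simp add: restrict_vec_def vec_eq_iff)

lemma norm_restrict_vec_le: "norm (restrict_vec x I) \<le> norm x"
  by (rule norm_le_componentwise_cart) (simp add: restrict_vec_def)

lemma norm_restrict_vec_le_scaled:
  assumes "0 \<le> c" "\<And>i. \<bar>x$i\<bar> \<le> c * \<bar>y$i\<bar>"
  shows "norm (restrict_vec x I) \<le> c * norm (restrict_vec y I)"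
proof -
  have "norm (restrict_vec x I) \<le> norm (c *\<^sub>R restrict_vec y I)"
    by (rule norm_le_componentwise_cart) (simp add: restrict_vec_def assms abs_mult)
  then show ?thesis using assms(1) by simp
qed

lemma inner_restrict_vec_support:
  assumes "\<And>i. i \<notin> I \<Longrightarrow> x$i * y$i = 0"
  shows "x \<bullet> y = restrict_vec x I \<bullet> restrict_vec y I"
  unfolding inner_vec_def restrict_vec_def using assms by (intro sum.cong) auto

lemma inner_perturbation_le:
  fixes x y x' y' :: "real^'n"
  defines "I \<equiv> {i. x$i \<noteq> 0 \<and> y$i \<noteq> 0}"
  assumes supp_x: "\<And>i. x$i = 0 \<Longrightarrow> x'$i = 0" and supp_y: "\<And>i. y$i = 0 \<Longrightarrow> y'$i = 0"
    and "0 \<le> \<eta>" "0 \<le> c"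
    and dist_x: "norm (x - x') \<le> \<eta> * norm x" and dist_y: "norm (y - y') \<le> \<eta> * norm y"
    and restrict_x': "norm (restrict_vec x' I) \<le> c * norm (restrict_vec x I)"
  shows "\<bar>x \<bullet> y - x' \<bullet> y'\<bar>
    \<le> (1 + c) * \<eta> * max (norm (restrict_vec x I) * norm y) (norm x * norm (restrict_vec y I))"
proof -
  let ?M = "max (norm (restrict_vec x I) * norm y) (norm x * norm (restrict_vec y I))"
  let ?xI = "restrict_vec x I" and ?yI = "restrict_vec y I"
    and ?x'I = "restrict_vec x' I" and ?y'I = "restrict_vec y' I"
  have "x \<bullet> y = ?xI \<bullet> ?yI" by (rule inner_restrict_vec_support) (auto simp: I_def)
  moreover have "x' \<bullet> y' = ?x'I \<bullet> ?y'I"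
    by (rule inner_restrict_vec_support) (auto simp: I_def supp_x supp_y)
  ultimately have decomp: "x \<bullet> y - x' \<bullet> y'
      = restrict_vec (x - x') I \<bullet> ?yI + ?x'I \<bullet> restrict_vec (y - y') I"
    by (simp add: restrict_vec_diff inner_diff_left inner_diff_right)
  have "\<bar>x \<bullet> y - x' \<bullet> y'\<bar>
      \<le> \<bar>restrict_vec (x - x') I \<bullet> ?yI\<bar> + \<bar>?x'I \<bullet> restrict_vec (y - y') I\<bar>"
    unfolding decomp by (rule abs_triangle_ineq)
  also have "\<dots> \<le> norm (restrict_vec (x - x') I) * norm ?yI + norm ?x'I * norm (restrict_vec (y - y') I)"
    by (intro add_mono Cauchy_Schwarz_ineq2)
  also have "\<dots> \<le> (\<eta> * norm x) * norm ?yI + (c * norm ?xI) * (\<eta> * norm y)"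
    using norm_restrict_vec_le dist_x dist_y restrict_x' \<open>0 \<le> \<eta>\<close> \<open>0 \<le> c\<close>
    by (intro add_mono mult_mono) (auto intro: order_trans)
  also have "\<dots> = \<eta> * (norm x * norm ?yI) + c * \<eta> * (norm ?xI * norm y)"
    by (simp add: algebra_simps)
  also have "\<dots> \<le> \<eta> * ?M + c * \<eta> * ?M"
    using \<open>0 \<le> \<eta>\<close> \<open>0 \<le> c\<close> by (intro add_mono mult_left_mono) auto
  finally show ?thesis by (simp add: algebra_simps)
qed

locale unit_rounding =
  fixes z :: "real^'n" and L :: nat
  assumes norm_z: "norm z = 1" and L_pos: "0 < L"
begin

text \<open>In the notation of Round: \<open>peak\<close> is i*, \<open>floor_sq i\<close> is the truncated square
  \<open>zt[i]^2\<close>, and \<open>deficit\<close> is \<delta>.\<close>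

definition peak :: 'n where
  "peak = arg_max_on (\<lambda>i. \<bar>z$i\<bar>) UNIV"

definition floor_sq :: "'n \<Rightarrow> real" where
  "floor_sq i = real_of_int \<lfloor>(z$i)^2 * real L\<rfloor> / real L"

definition deficit :: real where
  "deficit = 1 - (\<Sum>i\<in>UNIV. floor_sq i)"

lemma sum_sq: "(\<Sum>i\<in>UNIV. (z$i)^2) = 1"
  using norm_z by (simp add: norm_vec_def L2_set_def)

lemma floor_sq_nonneg: "0 \<le> floor_sq i"
  by (simp add: floor_sq_def)

lemma floor_sq_le: "floor_sq i \<le> (z$i)^2"
  using L_pos by (simp add: floor_sq_def pos_divide_le_eq)

lemma sq_minus_floor_sq_less: "(z$i)^2 - floor_sq i < 1 / real L"
proof -
  have "(z$i)^2 * real L - real_of_int \<lfloor>(z$i)^2 * real L\<rfloor> < 1" by linarith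
  then have "((z$i)^2 * real L - real_of_int \<lfloor>(z$i)^2 * real L\<rfloor>) / real L < 1 / real L"
    using L_pos by (simp add: divide_strict_right_mono)
  then show ?thesis using L_pos by (simp add: floor_sq_def diff_divide_distrib)
qed

lemma floor_sq_eq_0: "z$i = 0 \<Longrightarrow> floor_sq i = 0"
  by (simp add: floor_sq_def)

lemma deficit_eq_sum: "deficit = (\<Sum>i\<in>UNIV. (z$i)^2 - floor_sq i)"
  by (simp add: deficit_def sum_subtractf sum_sq)

lemma sq_minus_floor_sq_le_deficit: "(z$i)^2 - floor_sq i \<le> deficit"
  unfolding deficit_eq_sum using floor_sq_le by (intro member_le_sum) auto

lemma deficit_le: "deficit \<le> real CARD('n) / real L"
proof -
  have "deficit \<le> (\<Sum>i\<in>(UNIV::'n set). 1 / real L)"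
    unfolding deficit_eq_sum using sq_minus_floor_sq_less by (intro sum_mono less_imp_le)
  then show ?thesis by simp
qed

lemma abs_le_peak: "\<bar>z$j\<bar> \<le> \<bar>z$peak\<bar>"
proof -
  have "Max (range (\<lambda>i. \<bar>z$i\<bar>)) \<in> range (\<lambda>i. \<bar>z$i\<bar>)" by (rule Max_in) auto
  then obtain k where k_eq: "Max (range (\<lambda>i. \<bar>z$i\<bar>)) = \<bar>z$k\<bar>" by (rule rangeE)
  have k: "\<bar>z$i\<bar> \<le> \<bar>z$k\<bar>" for i
    unfolding k_eq[symmetric] by (rule Max_ge) auto
  have "\<bar>z$peak\<bar> = \<bar>z$k\<bar>"
    unfolding peak_def arg_max_on_def by (rule arg_max_equality) (simp_all add: k)
  then show ?thesis using k by simp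
qed

lemma one_le_card_mult_peak_sq: "1 \<le> real CARD('n) * (z$peak)^2"
proof -
  have "1 \<le> (\<Sum>i\<in>(UNIV::'n set). (z$peak)^2)"
    unfolding sum_sq[symmetric] using abs_le_peak by (intro sum_mono) (simp add: abs_le_square_iff)
  then show ?thesis by simp
qed

lemma peak_nonzero: "z$peak \<noteq> 0"
  using one_le_card_mult_peak_sq by auto

lemma deficit_nonneg: "0 \<le> deficit"
  unfolding deficit_eq_sum using floor_sq_le by (intro sum_nonneg) simp

lemma round_vec_nth:
  "round_vec z L $ i = sgn (z$i) * sqrt (floor_sq i + (if i = peak then deficit else 0))"
proof -
  define zt where "zt = (\<chi> i. sgn (z$i) * sqrt (floor_sq i))"
  have zt_sq: "(zt$i)^2 = floor_sq i" for i
    by (cases "z$i" "0::real" rule: linorder_cases)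
      (simp_all add: zt_def floor_sq_eq_0 floor_sq_nonneg power_mult_distrib)
  have "(norm zt)^2 = (\<Sum>i\<in>UNIV. floor_sq i)"
    by (simp add: norm_vec_def L2_set_def zt_sq sum_nonneg floor_sq_nonneg)
  then show ?thesis
    unfolding round_vec_def Let_def peak_def[symmetric] floor_sq_def[symmetric] zt_def[symmetric]
    by (simp add: zt_sq deficit_def) (simp add: zt_def)
qed

lemma round_vec_nth_sq: "(round_vec z L $ i)^2 = floor_sq i + (if i = peak then deficit else 0)"
  using peak_nonzero floor_sq_nonneg[of i] deficit_nonneg
  by (cases "z$i" "0::real" rule: linorder_cases)
    (auto simp: round_vec_nth floor_sq_eq_0 power_mult_distrib)

lemma round_vec_nth_eq_0: "z$i = 0 \<Longrightarrow> round_vec z L $ i = 0"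
  by (simp add: round_vec_nth)

lemma round_vec_nth_sgn: "round_vec z L $ i = sgn (z$i) * \<bar>round_vec z L $ i\<bar>"
  using floor_sq_nonneg[of i] deficit_nonneg
  by (cases "z$i" "0::real" rule: linorder_cases) (simp_all add: round_vec_nth abs_mult)

lemma norm_round_vec: "norm (round_vec z L) = 1"
  by (simp add: norm_vec_def L2_set_def round_vec_nth_sq sum.distrib deficit_def)

lemma round_vec_nth_sq_grid: "\<exists>k::int. (round_vec z L $ i)^2 = of_int k / real L"
proof (cases "i = peak")
  case True
  let ?fl = "\<lambda>j. \<lfloor>(z$j)^2 * real L\<rfloor>"
  have "deficit = of_int (int L - (\<Sum>j\<in>UNIV. ?fl j)) / real L"
    using L_pos by (simp add: deficit_def floor_sq_def sum_divide_distrib[symmetric] diff_divide_distrib)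
  then have "(round_vec z L $ i)^2 = of_int (?fl i + (int L - (\<Sum>j\<in>UNIV. ?fl j))) / real L"
    using True by (simp add: round_vec_nth_sq floor_sq_def add_divide_distrib)
  then show ?thesis by blast
next
  case False
  then show ?thesis by (simp add: round_vec_nth_sq floor_sq_def)
qed

lemma round_vec_fixed:
  assumes grid: "\<And>i. \<exists>k::int. (z$i)^2 = of_int k / real L"
  shows "round_vec z L = z"
proof -
  have "floor_sq i = (z$i)^2" for i
  proof -
    obtain k :: int where "(z$i)^2 = of_int k / real L" using grid by blast
    then have "(z$i)^2 * real L = of_int k" using L_pos by simp
    then show ?thesis unfolding floor_sq_def using \<open>(z$i)^2 = of_int k / real L\<close> by simp
  qed
  then have "deficit = 0" by (simp add: deficit_def sum_sq)
  then show ?thesis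
    by (simp add: vec_eq_iff round_vec_nth \<open>\<And>i. floor_sq i = (z$i)^2\<close> sgn_mult_abs)
qed

context
  assumes L_ge: "real CARD('n)^3 \<le> real L"
begin

lemma sq_abs_diff_round_vec_nth_le: "(\<bar>round_vec z L $ i\<bar> - \<bar>z$i\<bar>)^2 \<le> 1 / real L"
proof (cases "i = peak")
  case False
  then have r_sq: "\<bar>round_vec z L $ i\<bar>^2 = floor_sq i" by (simp add: round_vec_nth_sq)
  then have "\<bar>round_vec z L $ i\<bar> \<le> \<bar>z$i\<bar>"
    using floor_sq_le by (simp add: abs_le_square_iff)
  then have "(\<bar>z$i\<bar> - \<bar>round_vec z L $ i\<bar>)^2 \<le> \<bar>z$i\<bar>^2 - \<bar>round_vec z L $ i\<bar>^2"
    by (intro sq_diff_le_diff_sq) auto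
  also have "\<dots> \<le> 1 / real L" using sq_minus_floor_sq_less[of i] r_sq by simp
  finally show ?thesis by (simp add: power2_commute)
next
  case True
  define n where "n = real CARD('n)"
  define a where "a = \<bar>z$i\<bar>"
  define b where "b = \<bar>round_vec z L $ i\<bar>"
  have b_sq: "b^2 = floor_sq i + deficit" using True by (simp add: b_def round_vec_nth_sq)
  have "a^2 \<le> b^2" using b_sq sq_minus_floor_sq_le_deficit[of i] by (simp add: a_def)
  then have "a \<le> b" by (simp add: a_def b_def abs_le_square_iff[symmetric])
  have gap: "0 \<le> b^2 - a^2" "b^2 - a^2 \<le> n / real L"
    using \<open>a^2 \<le> b^2\<close> b_sq floor_sq_le[of i] deficit_le by (auto simp: a_def n_def)
  have "(b - a)^2 \<le> (b - a)^2 * (n * a^2)"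
    using one_le_card_mult_peak_sq True by (simp add: a_def n_def mult_le_cancel_left1)
  also have "\<dots> = n * ((b - a)^2 * a^2)" by (simp add: algebra_simps)
  also have "\<dots> \<le> n * (n / real L)^2"
  proof (intro mult_left_mono)
    have "(b - a)^2 * a^2 \<le> (b^2 - a^2)^2"
      by (rule sq_diff_mult_sq_le[OF _ \<open>a \<le> b\<close>]) (simp add: a_def)
    also have "\<dots> \<le> (n / real L)^2" by (rule power_mono[OF gap(2) gap(1)])
    finally show "(b - a)^2 * a^2 \<le> (n / real L)^2" .
  qed (simp add: n_def)
  also have "\<dots> = n^3 / (real L)^2" by (simp add: power2_eq_square power3_eq_cube)
  also have "\<dots> \<le> real L / (real L)^2" using L_ge by (intro divide_right_mono) (auto simp: n_def)
  also have "\<dots> = 1 / real L" by (simp add: power2_eq_square)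
  finally show ?thesis by (simp add: a_def b_def)
qed

lemma abs_diff_round_vec_nth_le: "\<bar>z$i - round_vec z L $ i\<bar> \<le> 1 / sqrt (real L)"
proof -
  have "\<bar>z$i - round_vec z L $ i\<bar> = \<bar>\<bar>round_vec z L $ i\<bar> - \<bar>z$i\<bar>\<bar>"
    using round_vec_nth_sgn[of i] round_vec_nth_eq_0[of i]
    by (cases "z$i" "0::real" rule: linorder_cases) (auto simp: abs_if)
  also have "\<dots> \<le> sqrt (1 / real L)"
    using sq_abs_diff_round_vec_nth_le[of i] by (intro real_le_rsqrt) simp
  finally show ?thesis by (simp add: real_sqrt_divide)
qed

lemma abs_round_vec_nth_le: "\<bar>round_vec z L $ i\<bar> \<le> 2 * \<bar>z$i\<bar>"
proof (cases "i = peak")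
  case False
  then have "\<bar>round_vec z L $ i\<bar> \<le> \<bar>z$i\<bar>"
    using floor_sq_le by (simp add: abs_le_square_iff round_vec_nth_sq)
  then show ?thesis by simp
next
  case True
  have n_le_L: "real CARD('n) \<le> real L"
  proof -
    have "real CARD('n) \<le> real CARD('n)^3" by (rule self_le_power) auto
    then show ?thesis using L_ge by linarith
  qed
  have "(1 / sqrt (real L))^2 \<le> (z$i)^2"
  proof -
    have "(1 / sqrt (real L))^2 = 1 / real L" by (simp add: power_divide)
    also have "\<dots> \<le> 1 / real CARD('n)" using n_le_L L_pos by (intro divide_left_mono) auto
    also have "\<dots> \<le> (z$i)^2"
      using one_le_card_mult_peak_sq True by (simp add: divide_le_eq mult.commute)
    finally show ?thesis .
  qed
  then have "1 / sqrt (real L) \<le> \<bar>z$i\<bar>"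
    using abs_le_square_iff[of "1 / sqrt (real L)" "z$i"] by simp
  then show ?thesis using abs_diff_round_vec_nth_le[of i] by linarith
qed

end

end

lemma accuracy_resolution_bounds:
  fixes n L \<epsilon> :: real
  assumes "1 \<le> n" "0 < \<epsilon>" "\<epsilon> < 1" and L: "9 * n^6 / \<epsilon>^2 \<le> L"
  shows "n^3 \<le> L" "3 * sqrt (n / L) \<le> \<epsilon>"
proof -
  have "\<epsilon>^2 \<le> 1" using assms by (simp add: power_le_one)
  then have "9 * n^6 \<le> 9 * n^6 / \<epsilon>^2" using assms by (simp add: le_divide_eq)
  then have n6: "9 * n^6 \<le> L" using L by linarith
  have "n^3 \<le> n^6" "n \<le> n^6" "0 \<le> n^6"
    using \<open>1 \<le> n\<close> by (simp_all add: power_increasing self_le_power)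
  then show "n^3 \<le> L" using n6 by linarith
  have "0 < L" using n6 \<open>n \<le> n^6\<close> \<open>1 \<le> n\<close> by linarith
  have "9 * n \<le> \<epsilon>^2 * L"
  proof -
    have "9 * n \<le> \<epsilon>^2 * (9 * n^6 / \<epsilon>^2)" using \<open>n \<le> n^6\<close> \<open>0 < \<epsilon>\<close> by simp
    also have "\<dots> \<le> \<epsilon>^2 * L" using L by (intro mult_left_mono) auto
    finally show ?thesis .
  qed
  then have "9 * (n / L) \<le> \<epsilon>^2" using \<open>0 < L\<close> by (simp add: field_simps)
  then have "(3 * sqrt (n / L))^2 \<le> \<epsilon>^2"
    using \<open>0 < L\<close> \<open>1 \<le> n\<close> by (simp add: power_mult_distrib)
  then show "3 * sqrt (n / L) \<le> \<epsilon>" by (rule power2_le_imp_le) (use \<open>0 < \<epsilon>\<close> in simp)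
qed

definition round_rescaled :: "real^'n \<Rightarrow> nat \<Rightarrow> real^'n" where
  "round_rescaled a L = norm a *\<^sub>R round_vec ((1 / norm a) *\<^sub>R a) L"

context
  fixes a :: "real^'n" and L :: nat
  assumes a_nonzero: "a \<noteq> 0" and L_pos: "0 < L"
begin

interpretation unit_rounding "(1 / norm a) *\<^sub>R a" L
  using a_nonzero L_pos by unfold_locales simp_all

lemma norm_round_rescaled: "norm (round_rescaled a L) = norm a"
  by (simp add: round_rescaled_def norm_round_vec)

lemma round_rescaled_sq_grid:
  "\<exists>k::int. (round_rescaled a L $ i)^2 / (norm (round_rescaled a L))^2 = of_int k / real L"
  using a_nonzero round_vec_nth_sq_grid[of i]
  by (simp add: norm_round_rescaled) (simp add: round_rescaled_def power_mult_distrib)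

lemma wmh_sketch_round_rescaled:
  "wmh_sketch H L m s (round_rescaled a L) = wmh_sketch H L m s a"
proof -
  have "unit_rounding (round_vec ((1 / norm a) *\<^sub>R a) L) L"
    using norm_round_vec L_pos by unfold_locales
  then have "round_vec (round_vec ((1 / norm a) *\<^sub>R a) L) L = round_vec ((1 / norm a) *\<^sub>R a) L"
    using round_vec_nth_sq_grid by (rule unit_rounding.round_vec_fixed)
  moreover have
    "(1 / norm (round_rescaled a L)) *\<^sub>R round_rescaled a L = round_vec ((1 / norm a) *\<^sub>R a) L"
    using a_nonzero by (simp add: norm_round_rescaled) (simp add: round_rescaled_def)
  ultimately show ?thesis by (simp add: wmh_sketch_def Let_def norm_round_rescaled)
qed

lemma round_rescaled_nth_eq_0: "a$i = 0 \<Longrightarrow> round_rescaled a L $ i = 0"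
  by (simp add: round_rescaled_def round_vec_nth_eq_0)

context
  assumes L_ge: "real CARD('n)^3 \<le> real L"
begin

lemma norm_diff_round_rescaled_le:
  "norm (a - round_rescaled a L) \<le> sqrt (real CARD('n) / real L) * norm a"
proof -
  let ?z = "(1 / norm a) *\<^sub>R a"
  have "a - round_rescaled a L = norm a *\<^sub>R (?z - round_vec ?z L)"
    using a_nonzero by (simp add: round_rescaled_def scaleR_diff_right)
  then have "norm (a - round_rescaled a L) = norm a * norm (?z - round_vec ?z L)" by simp
  also have "\<dots> \<le> norm a * (sqrt (real CARD('n)) * (1 / sqrt (real L)))"
    using abs_diff_round_vec_nth_le[OF L_ge] by (intro mult_left_mono norm_le_sqrt_card_mult) auto
  also have "\<dots> = sqrt (real CARD('n) / real L) * norm a" by (simp add: real_sqrt_divide)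
  finally show ?thesis .
qed

lemma abs_round_rescaled_nth_le: "\<bar>round_rescaled a L $ i\<bar> \<le> 2 * \<bar>a$i\<bar>"
proof -
  let ?z = "(1 / norm a) *\<^sub>R a"
  have "\<bar>round_rescaled a L $ i\<bar> = norm a * \<bar>round_vec ?z L $ i\<bar>"
    by (simp add: round_rescaled_def abs_mult)
  also have "\<dots> \<le> norm a * (2 * \<bar>?z $ i\<bar>)"
    using abs_round_vec_nth_le[OF L_ge] by (intro mult_left_mono) auto
  also have "\<dots> = 2 * \<bar>a$i\<bar>" using a_nonzero by (simp add: abs_mult)
  finally show ?thesis .
qed

lemma norm_restrict_round_rescaled_le:
  "norm (restrict_vec (round_rescaled a L) I) \<le> 2 * norm (restrict_vec a I)"
  using abs_round_rescaled_nth_le by (simp add: norm_restrict_vec_le_scaled)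

end

end

lemma inner_round_rescaled_error:
  fixes a b :: "real^'n"
  defines "I \<equiv> {i. a$i \<noteq> 0 \<and> b$i \<noteq> 0}"
  assumes "a \<noteq> 0" "b \<noteq> 0" "0 < L"
    and "0 < \<epsilon>" "\<epsilon> < 1" "9 * real CARD('n)^6 / \<epsilon>^2 \<le> real L"
  shows "\<bar>a \<bullet> b - round_rescaled a L \<bullet> round_rescaled b L\<bar>
    \<le> \<epsilon> * max (norm (restrict_vec a I) * norm b) (norm a * norm (restrict_vec b I))"
proof -
  let ?M = "max (norm (restrict_vec a I) * norm b) (norm a * norm (restrict_vec b I))"
  note L_bounds = accuracy_resolution_bounds[of "real CARD('n)", OF _ assms(5-7)]
  have "\<bar>a \<bullet> b - round_rescaled a L \<bullet> round_rescaled b L\<bar>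
      \<le> (1 + 2) * sqrt (real CARD('n) / real L) * ?M"
    unfolding I_def using assms(2-4) L_bounds
    by (intro inner_perturbation_le round_rescaled_nth_eq_0 norm_diff_round_rescaled_le
        norm_restrict_round_rescaled_le) simp_all
  also have "\<dots> \<le> \<epsilon> * ?M" using L_bounds by (intro mult_right_mono) (auto simp: le_max_iff_disj)
  finally show ?thesis .
qed

lemma max_norm_restrict_round_rescaled_le:
  fixes a b :: "real^'n"
  assumes "a \<noteq> 0" "b \<noteq> 0" "0 < L" "real CARD('n)^3 \<le> real L"
  shows "max (norm (restrict_vec (round_rescaled a L) I) * norm (round_rescaled b L))
             (norm (round_rescaled a L) * norm (restrict_vec (round_rescaled b L) I))
    \<le> 2 * max (norm (restrict_vec a I) * norm b) (norm a * norm (restrict_vec b I))"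
proof -
  have "norm (restrict_vec (round_rescaled a L) I) * norm (round_rescaled b L)
      \<le> 2 * norm (restrict_vec a I) * norm b"
    using norm_restrict_round_rescaled_le[OF assms(1,3,4)]
    by (simp add: norm_round_rescaled assms mult_right_mono)
  moreover have "norm (round_rescaled a L) * norm (restrict_vec (round_rescaled b L) I)
      \<le> norm a * (2 * norm (restrict_vec b I))"
    using norm_restrict_round_rescaled_le[OF assms(2-4)]
    by (simp add: norm_round_rescaled assms mult_left_mono)
  ultimately show ?thesis by (auto simp: max_def)
qed

theorem lemma3:
  fixes a b :: "real^'n" and L :: nat
  assumes "a \<noteq> 0" and "b \<noteq> 0" and "L > 0"
  defines "a' \<equiv> norm a *\<^sub>R round_vec ((1 / norm a) *\<^sub>R a) L"
      and "b' \<equiv> norm b *\<^sub>R round_vec ((1 / norm b) *\<^sub>R b) L"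
      and "I \<equiv> {i. a$i \<noteq> 0 \<and> b$i \<noteq> 0}"
  shows "(\<forall>i. (\<exists>k::int. (a'$i)^2 / (norm a')^2 = of_int k / real L)
              \<and> (\<exists>k::int. (b'$i)^2 / (norm b')^2 = of_int k / real L))
       \<and> (\<forall>(H :: 's \<Rightarrow> nat \<Rightarrow> ('n \<times> nat) \<Rightarrow> real) m s.
            wmh_sketch H L m s a = wmh_sketch H L m s a'
          \<and> wmh_sketch H L m s b = wmh_sketch H L m s b')
       \<and> (\<forall>\<epsilon>::real. 0 < \<epsilon> \<and> \<epsilon> < 1 \<and> real L \<ge> 9 * real CARD('n)^6 / \<epsilon>^2 \<longrightarrow>
            \<bar>a \<bullet> b - a' \<bullet> b'\<bar> \<le> \<epsilon> * max (norm (restrict_vec a I) * norm b)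
                                              (norm a * norm (restrict_vec b I)))
       \<and> (real L \<ge> real CARD('n)^3 \<longrightarrow>
            max (norm (restrict_vec a' I) * norm b') (norm a' * norm (restrict_vec b' I))
              \<le> 2 * max (norm (restrict_vec a I) * norm b) (norm a * norm (restrict_vec b I)))"
proof -
  have a': "a' = round_rescaled a L" and b': "b' = round_rescaled b L"
    by (simp_all add: a'_def b'_def round_rescaled_def)
  show ?thesis
    unfolding a' b' I_def
    using round_rescaled_sq_grid[OF assms(1,3)] round_rescaled_sq_grid[OF assms(2,3)]
      wmh_sketch_round_rescaled[OF assms(1,3), symmetric] wmh_sketch_round_rescaled[OF assms(2,3), symmetric]
      inner_round_rescaled_error[OF assms(1-3)] max_norm_restrict_round_rescaled_le[OF assms(1-3)]
    by auto
qed

end
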